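(* Let $s\ge2$, $k\ge1$ and $s_0$ be integers with $0\le s_0<\min\{k,s\}$. Let $n=sk+s_0$, $d_c=\lfloor n/s\rfloor=k$ and $d_o=\lfloor (n-1)/(s-1)\rfloor$, and define $$f(s,k,s_0)=\frac{\gamma_{MBR,c}}{\gamma_{MBR,o}}=\frac{\dfrac{d_c}{kd_c-\lfloor k/2\rfloor\lceil k/2\rceil}}{\dfrac{2d_o}{2kd_o-k^2+k}}.$$ Then $$f(s,k,s_0)\le\frac{2}{3}\cdot\frac{(s+3)k+s-3}{(s+1)k-1}.$$
   Context: $\gamma_{MBR,c}=\frac{d_cM}{kd_c-\lfloor k/2\rfloor\lceil k/2\rceil}$ is the minimum repair bandwidth (functional repair) of the Fixed Cluster Repair System with $s$ clusters, and $\gamma_{MBR,o}=\frac{2d_oM}{2kd_o-k^2+k}$ is the minimum-bandwidth-regenerating repair bandwidth of a standard regenerating code with repair degree $d_o$; the file size $M$ cancels in the ratio. *)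

theory Defs
  imports Complex_Main
begin

text \<open>Repair bandwidth (per unit file size M) of the Fixed Cluster Repair System (MBR, functional repair).\<close>
definition gamma_MBR_c :: "nat \<Rightarrow> nat \<Rightarrow> real" where
  "gamma_MBR_c k dc = real dc / (real k * real dc - real (k div 2) * of_int \<lceil>real k / 2\<rceil>)"

text \<open>MBR repair bandwidth (per unit file size M) of a standard regenerating code with repair degree do.\<close>
definition gamma_MBR_o :: "nat \<Rightarrow> nat \<Rightarrow> real" where
  "gamma_MBR_o k d = 2 * real d / (2 * real k * real d - (real k)^2 + real k)"

definition f_ratio :: "nat \<Rightarrow> nat \<Rightarrow> nat \<Rightarrow> real" where
  "f_ratio s k s0 =
     (let n = s * k + s0; dc = n div s; d = (n - 1) div (s - 1)
      in gamma_MBR_c k dc / gamma_MBR_o k d)"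

end

theory Submission
  imports Defs
begin

text \<open>Since \<open>\<lfloor>k/2\<rfloor>\<lceil>k/2\<rceil> \<le> k\<^sup>2/4\<close>, the cluster bandwidth with \<open>d\<^sub>c = k\<close> is at most
  \<open>4/(3k)\<close>, while \<open>1/\<gamma>\<^sub>o = (k/2)(2 - (k-1)/d\<^sub>o)\<close>; hence \<open>f \<le> (2/3)(2 - (k-1)/d\<^sub>o)\<close>.
  This grows with \<open>d\<^sub>o\<close>, and \<open>d\<^sub>o(s-1) \<le> n - 1 \<le> (s+1)k - 2\<close>; substituting this bound leaves
  \<open>(A-2)/(B-1) \<le> A/B\<close> for the numerator \<open>A\<close> and denominator \<open>B\<close> of the claim, i.e. \<open>A \<le> 2B\<close>.\<close>

lemma floor_half_mult_ceiling_half_le: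
  "4 * (real (k div 2) * of_int \<lceil>real k / 2\<rceil>) \<le> (real k)\<^sup>2"
proof (cases "even k")
  case True
  then obtain m where "k = 2 * m" by blast
  then show ?thesis by (simp add: power2_eq_square)
next
  case False
  then obtain m where m: "k = 2 * m + 1" using oddE by blast
  then have "\<lceil>real k / 2\<rceil> = int m + 1" by (simp add: ceiling_eq_iff)
  with m show ?thesis by (simp add: power2_eq_square algebra_simps)
qed

lemma gamma_MBR_c_diag_le:
  assumes "k \<ge> 1"
  shows "gamma_MBR_c k k \<le> 4 / (3 * real k)"
proof -
  define q where "q = real (k div 2) * of_int \<lceil>real k / 2\<rceil>"
  have q_le: "3 / 4 * (real k)\<^sup>2 \<le> (real k)\<^sup>2 - q"
    using floor_half_mult_ceiling_half_le[of k] unfolding q_def by simp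
  have pos: "0 < 3 / 4 * (real k)\<^sup>2" using assms by simp
  have "real k / ((real k)\<^sup>2 - q) \<le> real k / (3 / 4 * (real k)\<^sup>2)"
    using q_le pos by (intro divide_left_mono mult_pos_pos) linarith+
  also have "\<dots> = 4 / (3 * real k)" by (simp add: power2_eq_square)
  finally show ?thesis unfolding gamma_MBR_c_def q_def by (simp add: power2_eq_square)
qed

lemma inverse_gamma_MBR_o:
  assumes "d > 0"
  shows "1 / gamma_MBR_o k d = real k / 2 * (2 - (real k - 1) / real d)"
  using assms unfolding gamma_MBR_o_def by (simp add: field_simps power2_eq_square)

lemma gamma_MBR_ratio_le:
  assumes "k \<ge> 1" and "k \<le> d"
  shows "gamma_MBR_c k k / gamma_MBR_o k d \<le> 2 / 3 * (2 - (real k - 1) / real d)"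
proof -
  have "(real k - 1) / real d \<le> 1" using assms by simp
  then have inv_nonneg: "0 \<le> real k / 2 * (2 - (real k - 1) / real d)" by simp
  have d_pos: "d > 0" using assms by simp
  have "gamma_MBR_c k k / gamma_MBR_o k d = gamma_MBR_c k k * (1 / gamma_MBR_o k d)" by simp
  also have "\<dots> \<le> 4 / (3 * real k) * (real k / 2 * (2 - (real k - 1) / real d))"
    unfolding inverse_gamma_MBR_o[OF d_pos]
    using inv_nonneg gamma_MBR_c_diag_le[OF assms(1)] by (intro mult_right_mono) auto
  also have "\<dots> = 2 / 3 * (2 - (real k - 1) / real d)" using assms(1) by simp
  finally show ?thesis .
qed

lemma repair_degree_bounds:
  fixes s k s0 :: nat
  assumes "s \<ge> 2" and "k \<ge> 1" and "s0 < k"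
  defines "d \<equiv> (s * k + s0 - 1) div (s - 1)"
  shows "k \<le> d" and "d * (s - 1) + 2 \<le> (s + 1) * k"
proof -
  have "k * (s - 1) \<le> s * k + s0 - 1" using assms(1,2) by (simp add: algebra_simps diff_mult_distrib2)
  then show "k \<le> d" unfolding d_def using assms(1) by (simp add: less_eq_div_iff_mult_less_eq)
  have "d * (s - 1) \<le> s * k + s0 - 1" unfolding d_def by (rule div_times_less_eq_dividend)
  also have "\<dots> + 2 \<le> (s + 1) * k" using assms(1-3) by (simp add: Suc_le_eq)
  finally show "d * (s - 1) + 2 \<le> (s + 1) * k" by simp
qed

lemma two_minus_div_le_of_degree_bound:
  fixes S K D :: real
  assumes "S \<ge> 2" and "K \<ge> 1" and "D > 0" and "D * (S - 1) + 2 \<le> (S + 1) * K"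
  shows "2 - (K - 1) / D \<le> ((S + 3) * K + S - 3) / ((S + 1) * K - 1)"
proof -
  define E where "E = (S + 1) * K - 2"
  have "3 \<le> (S + 1) * K" using mult_mono[of 3 "S + 1" 1 K] assms(1,2) by simp
  then have E_pos: "E > 0" unfolding E_def by simp
  have "(K - 1) * (S - 1) / E \<le> (K - 1) / D"
  proof -
    have "(K - 1) * (D * (S - 1)) \<le> (K - 1) * E"
      using assms unfolding E_def by (intro mult_left_mono) auto
    then show ?thesis using E_pos assms(3) by (simp add: field_simps)
  qed
  moreover have "2 - (K - 1) * (S - 1) / E = ((S + 3) * K + S - 5) / E"
    using E_pos unfolding E_def by (simp add: field_simps)
  moreover have "((S + 3) * K + S - 5) / E \<le> ((S + 3) * K + S - 3) / ((S + 1) * K - 1)"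
  proof -
    have "S - 1 \<le> (S - 1) * K" using assms by simp
    then show ?thesis using E_pos unfolding E_def by (simp add: field_simps)
  qed
  ultimately show ?thesis by linarith
qed

theorem proposition1:
  fixes s k s0 :: nat
  assumes "s \<ge> 2" and "k \<ge> 1" and "s0 < min k s"
  shows "f_ratio s k s0 \<le> 2 / 3 * (((real s + 3) * real k + real s - 3) / ((real s + 1) * real k - 1))"
proof -
  define d where "d = (s * k + s0 - 1) div (s - 1)"
  have kd: "k \<le> d" and d_upper: "d * (s - 1) + 2 \<le> (s + 1) * k"
    using repair_degree_bounds[OF assms(1,2)] assms(3) unfolding d_def by auto
  have "f_ratio s k s0 = gamma_MBR_c k k / gamma_MBR_o k d"
    unfolding f_ratio_def d_def using assms(3) by simp
  also have "\<dots> \<le> 2 / 3 * (2 - (real k - 1) / real d)"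
    using gamma_MBR_ratio_le[OF assms(2) kd] .
  also have "\<dots> \<le> 2 / 3 * (((real s + 3) * real k + real s - 3) / ((real s + 1) * real k - 1))"
  proof -
    have "real (d * (s - 1) + 2) \<le> real ((s + 1) * k)" using d_upper by (simp only: of_nat_le_iff)
    then have "real d * (real s - 1) + 2 \<le> (real s + 1) * real k"
      using assms(1) by (simp only: of_nat_add of_nat_mult of_nat_diff) simp
    with assms kd have "2 - (real k - 1) / real d
        \<le> ((real s + 3) * real k + real s - 3) / ((real s + 1) * real k - 1)"
      by (intro two_minus_div_le_of_degree_bound) simp_all
    then show ?thesis by (rule mult_left_mono) simp
  qed
  finally show ?thesis .
qed

end
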